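(* Consider a discounted MDP with finite state space $\mathcal{S}$, finite action space $\mathcal{A}$, reward vector $r$, transition matrix $P$ with $P_{sa,\tilde s}=\Pr(\tilde s\mid s,a)$, initial state distribution $\mu_0$ with full support, and discount $\gamma\in[0,1)$. Let $\theta\mapsto\pi_\theta$ be a differentiable parametrized policy with $\pi_\theta(s,a)>0$ for all $(s,a)$, and let the critic be directly parametrized by $q\in\mathbb{R}^{|\mathcal{S}||\mathcal{A}|}$. Let $\Psi_\theta=I-\gamma P\Pi_\theta$, $D_\theta=\Delta(d_\theta)$, $\delta_\theta=r-\Psi_\theta q$ and $J_\pi(\theta,q)=(1-\gamma)\mu_0^\top\Pi_\theta q$. Define the semi-gradient quantities: $\partial_q^{\mathrm{semi}}J_q=-D_\theta\delta_\theta$ (a function of $(\theta,q)$); the semi-Hessian $(\partial_q^{\mathrm{semi}})^2J_q=D_\theta$; the semi-derivative $\partial_q^{\mathrm{semi}}J_\pi=d_\theta$; and let $\partial_\theta\partial_q^{\mathrm{semi}}J_q$ be the Jacobian in $\theta$ of $-D_\theta\delta_\theta$ at fixed $q$ (derivative through both $D_\theta$ and $\delta_\theta$). Define $$g^{\mathrm{semi}}_{S,\theta}=\partial_\theta J_\pi-(\partial_\theta\partial_q^{\mathrm{semi}}J_q)^\top\big((\partial_q^{\mathrm{semi}})^2J_q\big)^{-1}(\partial_q^{\mathrm{semi}}J_\pi).$$ Then for every $q$, $g^{\mathrm{semi}}_{S,\theta}=\partial_\theta J_\pi+\nabla_\theta(d_\theta^\top\delta_\theta)=\nabla_\theta J(\theta)$,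 where $J(\theta)=(1-\gamma)\mu_0^\top\Pi_\theta q_\theta$.
   Context: $\pi_\theta\in\mathbb{R}_+^{|\mathcal{S}||\mathcal{A}|}$ has entries $\pi_\theta(s,a)$, normalized in each state. $\Pi_\theta\in\mathbb{R}^{|\mathcal{S}|\times|\mathcal{S}||\mathcal{A}|}$ is block-diagonal with row $s$ containing $\pi_\theta(s,\cdot)^\top$, so $(\Pi_\theta v)(s)=\sum_a\pi_\theta(s,a)v(s,a)$. $q_\theta=\sum_{i\ge0}(\gamma P\Pi_\theta)^i r$. $d_\theta(s,a)=(1-\gamma)\sum_{i\ge0}\gamma^i\Pr(S_i=s,A_i=a)$ is the discounted state-action visitation distribution under $S_0\sim\mu_0$, policy $\pi_\theta$ and transitions $P$; $\Delta(v)$ is the diagonal matrix with diagonal $v$. $\partial_\theta J_\pi$ is the gradient of $J_\pi$ in $\theta$ at fixed $q$. (The semi-gradient quantities arise from the on-policy critic loss $\tfrac12\|r+\gamma P\Pi_\theta q-q\|^2_{d_\theta}$ and the identity $J_\pi=d_\theta^\top(q-q')$, $q'=r+\gamma P\Pi_\theta q$, by not differentiating through the target $q'$.) *)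

theory Defs
  imports "HOL-Analysis.Analysis"
begin

text \<open>The transition matrix P has rows indexed by (s,a) and columns by
  next states: P $ (s,a) $ s' = Pr(s' | s,a). A policy is a vector
  p :: real^('s \<times> 'a) with p $ (s,a) = pi(s,a).\<close>

definition PiMat :: "real^('s::finite \<times> 'a::finite) \<Rightarrow> real^('s \<times> 'a)^'s" where
  "PiMat p = (\<chi> s. \<chi> sa. if fst sa = s then p $ sa else 0)"

definition diagm :: "real^'n::finite \<Rightarrow> real^'n^'n" where
  "diagm v = (\<chi> i j. if i = j then v $ i else 0)"

definition qfun :: "real \<Rightarrow> real^'s::finite^('s \<times> 'a::finite) \<Rightarrow> real^('s \<times> 'a)
    \<Rightarrow> real^('s \<times> 'a) \<Rightarrow> real^('s \<times> 'a)" where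
  "qfun \<gamma> P r p = (\<Sum>i. ((\<lambda>v. (\<gamma> *\<^sub>R (P ** PiMat p)) *v v) ^^ i) r)"

text \<open>Distribution of the state S_i of the Markov chain started at mu0 under policy p.\<close>
fun state_dist :: "real^'s::finite \<Rightarrow> real^'s^('s \<times> 'a::finite) \<Rightarrow> real^('s \<times> 'a)
    \<Rightarrow> nat \<Rightarrow> real^'s" where
  "state_dist \<mu>0 P p 0 = \<mu>0"
| "state_dist \<mu>0 P p (Suc i) =
     (\<chi> s'. \<Sum>sa\<in>UNIV. (state_dist \<mu>0 P p i) $ fst sa * p $ sa * P $ sa $ s')"

definition sa_dist :: "real^'s::finite \<Rightarrow> real^'s^('s \<times> 'a::finite) \<Rightarrow> real^('s \<times> 'a)
    \<Rightarrow> nat \<Rightarrow> real^('s \<times> 'a)" where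
  "sa_dist \<mu>0 P p i = (\<chi> sa. (state_dist \<mu>0 P p i) $ fst sa * p $ sa)"

definition dvis :: "real \<Rightarrow> real^'s::finite \<Rightarrow> real^'s^('s \<times> 'a::finite)
    \<Rightarrow> real^('s \<times> 'a) \<Rightarrow> real^('s \<times> 'a)" where
  "dvis \<gamma> \<mu>0 P p = (1 - \<gamma>) *\<^sub>R (\<Sum>i. (\<gamma> ^ i) *\<^sub>R sa_dist \<mu>0 P p i)"

definition PsiMat :: "real \<Rightarrow> real^'s::finite^('s \<times> 'a::finite) \<Rightarrow> real^('s \<times> 'a)
    \<Rightarrow> real^('s \<times> 'a)^('s \<times> 'a)" where
  "PsiMat \<gamma> P p = mat 1 - \<gamma> *\<^sub>R (P ** PiMat p)"

definition tderr :: "real \<Rightarrow> real^'s::finite^('s \<times> 'a::finite) \<Rightarrow> real^('s \<times> 'a)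
    \<Rightarrow> real^('s \<times> 'a) \<Rightarrow> real^('s \<times> 'a) \<Rightarrow> real^('s \<times> 'a)" where
  "tderr \<gamma> P r p q = r - PsiMat \<gamma> P p *v q"

definition Jpi :: "real \<Rightarrow> real^'s::finite \<Rightarrow> real^('s \<times> 'a::finite)
    \<Rightarrow> real^('s \<times> 'a) \<Rightarrow> real" where
  "Jpi \<gamma> \<mu>0 p q = (1 - \<gamma>) * (\<mu>0 \<bullet> (PiMat p *v q))"

definition pderiv_k :: "(real^'k::finite \<Rightarrow> real) \<Rightarrow> real^'k \<Rightarrow> 'k \<Rightarrow> real" where
  "pderiv_k f \<theta> k = deriv (\<lambda>t. f (\<theta> + t *\<^sub>R axis k 1)) 0"

definition grad :: "(real^'k::finite \<Rightarrow> real) \<Rightarrow> real^'k \<Rightarrow> real^'k" where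
  "grad f \<theta> = (\<chi> k. pderiv_k f \<theta> k)"

definition jacobian :: "(real^'k::finite \<Rightarrow> real^'n::finite) \<Rightarrow> real^'k \<Rightarrow> real^'k^'n" where
  "jacobian F \<theta> = (\<chi> i. \<chi> k. pderiv_k (\<lambda>x. F x $ i) \<theta> k)"

definition g_semi :: "real \<Rightarrow> real^'s::finite \<Rightarrow> real^'s^('s \<times> 'a::finite) \<Rightarrow> real^('s \<times> 'a)
    \<Rightarrow> (real^'k::finite \<Rightarrow> real^('s \<times> 'a)) \<Rightarrow> real^'k \<Rightarrow> real^('s \<times> 'a) \<Rightarrow> real^'k" where
  "g_semi \<gamma> \<mu>0 P r pol \<theta> q =
     (let dJpi_dtheta = grad (\<lambda>x. Jpi \<gamma> \<mu>0 (pol x) q) \<theta>;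
          dq_Jq = (\<lambda>x. - (diagm (dvis \<gamma> \<mu>0 P (pol x)) *v tderr \<gamma> P r (pol x) q));
          dtheta_dq_Jq = jacobian dq_Jq \<theta>;
          hess_q_Jq = diagm (dvis \<gamma> \<mu>0 P (pol \<theta>));
          dq_Jpi = dvis \<gamma> \<mu>0 P (pol \<theta>)
      in dJpi_dtheta - transpose dtheta_dq_Jq *v (matrix_inv hess_q_Jq *v dq_Jpi))"

end

theory Submission
  imports Defs
begin

text \<open>
  Because every \<open>d\<^sub>\<theta>(s,a)\<close> is positive, \<open>D\<^sub>\<theta>\<^sup>-\<^sup>1 d\<^sub>\<theta>\<close> is the all-ones vector, so the
  correction term of \<open>g\<^sup>s\<^sup>e\<^sup>m\<^sup>i\<close> is the transposed Jacobian of \<open>-D\<^sub>\<theta> \<delta>\<^sub>\<theta>\<close> applied to \<open>1\<close>,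
  i.e. the gradient of the sum of its components \<open>-d\<^sub>\<theta>(s,a) \<delta>\<^sub>\<theta>(s,a)\<close>; this is the first
  identity.  For the second, \<open>d\<^sub>\<theta>\<close> is the discounted sum of the state-action distributions
  \<open>\<rho>\<^sub>i = \<rho>\<^sub>0 (P \<Pi>\<^sub>\<theta>)\<^sup>i\<close>, hence \<open>d\<^sub>\<theta>\<^sup>T \<Psi>\<^sub>\<theta> = (1 - \<gamma>) \<rho>\<^sub>0\<close>, while \<open>q\<^sub>\<theta>\<close> is the Neumann series
  solving \<open>\<Psi>\<^sub>\<theta> q\<^sub>\<theta> = r\<close>.  Since \<open>J\<^sub>\<pi>(\<theta>, q) = (1 - \<gamma>) \<rho>\<^sub>0\<^sup>T q\<close>, this gives
  \<open>d\<^sub>\<theta>\<^sup>T \<delta>\<^sub>\<theta> = d\<^sub>\<theta>\<^sup>T \<Psi>\<^sub>\<theta> (q\<^sub>\<theta> - q) = J(\<theta>) - J\<^sub>\<pi>(\<theta>, q)\<close> for every \<open>q\<close>.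
  Both series converge because \<open>P \<Pi>\<^sub>\<theta>\<close> is row-stochastic and \<open>\<gamma> < 1\<close>; the same fact makes
  \<open>\<Psi>\<^sub>\<theta>\<close> invertible, so by Cramer's rule \<open>d\<^sub>\<theta>\<close> is differentiable in \<open>\<theta>\<close>, which is what
  allows the gradients of these sums to be taken term by term.
\<close>

definition prob_vector :: "real^'n::finite \<Rightarrow> bool" where
  "prob_vector v \<longleftrightarrow> (\<forall>i. 0 \<le> v $ i) \<and> (\<Sum>i\<in>UNIV. v $ i) = 1"

definition row_stochastic :: "real^'n::finite^'m \<Rightarrow> bool" where
  "row_stochastic M \<longleftrightarrow> (\<forall>i. prob_vector (M $ i))"

lemma prob_vector_le_1: "prob_vector v \<Longrightarrow> v $ i \<le> 1"
  unfolding prob_vector_def using member_le_sum[of i UNIV "\<lambda>j. v $ j"] by auto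

lemma row_stochastic_abs_mult_le:
  assumes "row_stochastic M" "\<forall>j. \<bar>v $ j\<bar> \<le> c"
  shows "\<bar>(M *v v) $ i\<bar> \<le> c"
proof -
  have "\<bar>(M *v v) $ i\<bar> \<le> (\<Sum>j\<in>UNIV. \<bar>M $ i $ j * v $ j\<bar>)"
    unfolding matrix_vector_mult_def by (simp add: sum_abs)
  also have "\<dots> \<le> (\<Sum>j\<in>UNIV. M $ i $ j * c)"
    using assms unfolding row_stochastic_def prob_vector_def
    by (intro sum_mono) (auto simp: abs_mult intro: mult_left_mono)
  also have "\<dots> = c"
    using assms by (simp add: row_stochastic_def prob_vector_def flip: sum_distrib_right)
  finally show ?thesis .
qed

lemma prob_vector_vector_matrix_mult:
  assumes "row_stochastic M" "prob_vector v"
  shows "prob_vector (v v* M)"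
proof -
  have "(\<Sum>j\<in>UNIV. \<Sum>i\<in>UNIV. v $ i * M $ i $ j) = (\<Sum>i\<in>UNIV. v $ i * (\<Sum>j\<in>UNIV. M $ i $ j))"
    by (subst sum.swap) (simp add: sum_distrib_left)
  then show ?thesis
    using assms unfolding prob_vector_def row_stochastic_def vector_matrix_mult_def
    by (auto intro: sum_nonneg)
qed

lemma summable_if_components_le_geometric:
  fixes f :: "nat \<Rightarrow> real^'n::finite"
  assumes "0 \<le> \<gamma>" "\<gamma> < 1" "\<And>n j. \<bar>f n $ j\<bar> \<le> \<gamma> ^ n * C"
  shows "summable f"
proof (rule summable_comparison_test')
  show "summable (\<lambda>n. real CARD('n) * C * \<gamma> ^ n)"
    using assms by (intro summable_mult summable_geometric) simp
  fix n
  have "norm (f n) \<le> (\<Sum>j\<in>UNIV. \<bar>f n $ j\<bar>)" by (rule norm_le_l1_cart)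
  also have "\<dots> \<le> (\<Sum>j\<in>(UNIV::'n set). \<gamma> ^ n * C)" by (intro sum_mono assms(3))
  finally show "norm (f n) \<le> real CARD('n) * C * \<gamma> ^ n" by (simp add: ac_simps)
qed

lemma mat_1_minus_mult_suminf_iterates:
  fixes T :: "real^'n::finite^'n"
  assumes "summable (\<lambda>i. ((\<lambda>v. T *v v) ^^ i) b)"
  shows "(mat 1 - T) *v (\<Sum>i. ((\<lambda>v. T *v v) ^^ i) b) = b"
proof -
  let ?f = "\<lambda>i. ((\<lambda>v. T *v v) ^^ i) b"
  have "T *v suminf ?f = (\<Sum>i. T *v ?f i)"
    using assms by (intro bounded_linear.suminf) simp_all
  also have "\<dots> = (\<Sum>i. ?f (Suc i))" by simp
  also have "\<dots> = suminf ?f - b" using suminf_split_head[OF assms] by simp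
  finally show ?thesis by (simp add: matrix_vector_mult_diff_rdistrib)
qed

lemma iterates_row_stochastic_le:
  fixes M :: "real^'n::finite^'n"
  assumes "row_stochastic M" "0 \<le> \<gamma>"
  shows "\<bar>((\<lambda>v. (\<gamma> *\<^sub>R M) *v v) ^^ n) b $ j\<bar> \<le> \<gamma> ^ n * norm b"
proof (induction n arbitrary: j)
  case 0
  show ?case using component_le_norm_cart[of b j] by simp
next
  case (Suc n)
  have "\<bar>(M *v ((\<lambda>v. (\<gamma> *\<^sub>R M) *v v) ^^ n) b) $ j\<bar> \<le> \<gamma> ^ n * norm b"
    using assms(1) by (rule row_stochastic_abs_mult_le) (simp add: Suc.IH)
  then show ?case
    using assms(2) by (simp add: abs_mult scaleR_matrix_vector_assoc[symmetric] mult.assoc mult_left_mono)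
qed

lemma mat_1_minus_row_stochastic_mult_neumann:
  fixes M :: "real^'n::finite^'n"
  assumes "row_stochastic M" "0 \<le> \<gamma>" "\<gamma> < 1"
  shows "(mat 1 - \<gamma> *\<^sub>R M) *v (\<Sum>i. ((\<lambda>v. (\<gamma> *\<^sub>R M) *v v) ^^ i) b) = b"
  using assms iterates_row_stochastic_le[OF assms(1,2)]
  by (intro mat_1_minus_mult_suminf_iterates summable_if_components_le_geometric)

lemma invertible_mat_1_minus_row_stochastic:
  fixes M :: "real^'n::finite^'n"
  assumes "row_stochastic M" "0 \<le> \<gamma>" "\<gamma> < 1"
  shows "invertible (mat 1 - \<gamma> *\<^sub>R M)"
  unfolding invertible_right_inverse matrix_right_invertible_surjective
  using mat_1_minus_row_stochastic_mult_neumann[OF assms] by (rule surjI)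

lemma diagm_mult_vector_nth: "(diagm v *v w) $ i = v $ i * (w $ i :: real)"
proof -
  have "(diagm v *v w) $ i = (\<Sum>j\<in>UNIV. if j = i then v $ i * w $ j else 0)"
    unfolding matrix_vector_mult_def diagm_def vec_lambda_beta by (rule sum.cong) auto
  then show ?thesis by simp
qed

lemma diagm_mult_diagm: "diagm a ** diagm b = diagm (\<chi> i. a $ i * b $ i :: real^'n::finite)"
proof -
  have "(diagm a ** diagm b) $ i $ j
      = (\<Sum>k\<in>UNIV. if k = i then (if i = j then a $ i * b $ i else 0) else 0)" for i j
    unfolding matrix_matrix_mult_def diagm_def vec_lambda_beta by (rule sum.cong) auto
  then show ?thesis by (simp add: vec_eq_iff diagm_def)
qed

lemma matrix_inv_mult_self:
  fixes A :: "'a::semiring_1^'n::finite^'m::finite"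
  assumes "invertible A"
  shows "matrix_inv A ** A = mat 1"
  using assms unfolding invertible_def matrix_inv_def by (rule someI_ex[THEN conjunct2])

lemma matrix_inv_diagm_mult_self:
  assumes "\<forall>i. d $ i \<noteq> (0::real)"
  shows "matrix_inv (diagm d) *v d = 1"
proof -
  have "diagm d ** diagm (\<chi> i. inverse (d $ i)) = mat 1"
    unfolding diagm_mult_diagm using assms by (simp add: vec_eq_iff diagm_def mat_def)
  then have "invertible (diagm d)"
    using invertible_right_inverse by blast
  then have "matrix_inv (diagm d) *v (diagm d *v 1) = 1"
    by (simp add: matrix_vector_mul_assoc matrix_inv_mult_self)
  moreover have "diagm d *v 1 = d"
    by (simp add: vec_eq_iff diagm_mult_vector_nth)
  ultimately show ?thesis by simp
qed

lemma differentiable_prod: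
  fixes f :: "'i \<Rightarrow> 'v::real_normed_vector \<Rightarrow> 'b::real_normed_field"
  assumes "finite I" "\<forall>i\<in>I. f i differentiable (at x within S)"
  shows "(\<lambda>x. \<Prod>i\<in>I. f i x) differentiable (at x within S)"
  using assms by (induction I rule: finite_induct) auto

lemma differentiable_det:
  fixes A :: "'v::real_normed_vector \<Rightarrow> real^'n::finite^'n"
  assumes "\<forall>i j. (\<lambda>x. A x $ i $ j) differentiable (at \<theta>)"
  shows "(\<lambda>x. det (A x)) differentiable (at \<theta>)"
  unfolding det_def
  by (intro differentiable_sum ballI differentiable_mult differentiable_const differentiable_prod)
    (use assms finite_permutations in auto)

lemma differentiable_linear_system_solution:
  fixes A :: "'v::real_normed_vector \<Rightarrow> real^'n::finite^'n" and b y :: "'v \<Rightarrow> real^'n"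
  assumes "\<forall>i j. (\<lambda>x. A x $ i $ j) differentiable (at \<theta>)"
    and "\<forall>i. (\<lambda>x. b x $ i) differentiable (at \<theta>)"
    and "\<forall>x. det (A x) \<noteq> 0" and "\<forall>x. A x *v y x = b x"
  shows "(\<lambda>x. y x $ k) differentiable (at \<theta>)"
proof -
  let ?A\<^sub>k = "\<lambda>x. \<chi> i j. if j = k then b x $ i else A x $ i $ j"
  have "y x $ k = det (?A\<^sub>k x) / det (A x)" for x
    using cramer[OF assms(3)[rule_format, of x], of "y x" "b x"] assms(4) by simp
  moreover have "(\<lambda>x. det (?A\<^sub>k x) / det (A x)) differentiable (at \<theta>)"
  proof (intro differentiable_divide differentiable_det allI)
    fix i j
    show "(\<lambda>x. ?A\<^sub>k x $ i $ j) differentiable (at \<theta>)"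
      by (cases "j = k") (use assms in auto)
  qed (use assms in auto)
  ultimately show ?thesis by simp
qed

lemma differentiable_vec_nth:
  "f differentiable (at x) \<Longrightarrow> (\<lambda>x. f x $ i) differentiable (at x)"
  using differentiable_compose[OF bounded_linear_imp_differentiable[OF bounded_linear_vec_nth]] .

lemma pderiv_k_eq_derivative:
  fixes f :: "real^'k::finite \<Rightarrow> real"
  assumes "(f has_derivative f') (at \<theta>)"
  shows "pderiv_k f \<theta> k = f' (axis k 1)"
proof -
  have line: "((\<lambda>t. \<theta> + t *\<^sub>R axis k 1) has_derivative (\<lambda>t. t *\<^sub>R axis k 1)) (at 0)"
    by (auto intro!: derivative_eq_intros)
  have "((\<lambda>t. f (\<theta> + t *\<^sub>R axis k 1)) has_derivative (\<lambda>t. f' (t *\<^sub>R axis k 1))) (at 0)"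
    using has_derivative_compose[OF line] assms by simp
  moreover have "(\<lambda>t. f' (t *\<^sub>R axis k 1)) = (\<lambda>t. f' (axis k 1) * t)"
    using has_derivative_bounded_linear[OF assms] by (simp add: linear_simps fun_eq_iff mult.commute)
  ultimately show ?thesis
    unfolding pderiv_k_def by (intro DERIV_imp_deriv) (simp add: has_field_derivative_def)
qed

lemma grad_eq_derivative:
  "(f has_derivative f') (at \<theta>) \<Longrightarrow> grad f \<theta> = (\<chi> k. f' (axis k 1))"
  by (simp add: vec_eq_iff grad_def pderiv_k_eq_derivative)

lemma grad_sum:
  assumes "finite I" "\<forall>i\<in>I. f i differentiable (at \<theta>)"
  shows "grad (\<lambda>x. \<Sum>i\<in>I. f i x) \<theta> = (\<Sum>i\<in>I. grad (f i) \<theta>)"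
proof -
  obtain D where D: "\<forall>i\<in>I. (f i has_derivative D i) (at \<theta>)"
    using bchoice[OF assms(2)[unfolded differentiable_def]] by blast
  then have "grad (\<lambda>x. \<Sum>i\<in>I. f i x) \<theta> = (\<chi> k. \<Sum>i\<in>I. D i (axis k 1))"
    by (intro grad_eq_derivative has_derivative_sum) auto
  moreover have "grad (f i) \<theta> = (\<chi> k. D i (axis k 1))" if "i \<in> I" for i
    using D that by (simp add: grad_eq_derivative)
  ultimately show ?thesis by (simp add: vec_eq_iff cong: sum.cong)
qed

lemma grad_add:
  assumes "f differentiable (at \<theta>)" "g differentiable (at \<theta>)"
  shows "grad (\<lambda>x. f x + g x) \<theta> = grad f \<theta> + grad g \<theta>"
proof -
  obtain D E where D: "(f has_derivative D) (at \<theta>)" and E: "(g has_derivative E) (at \<theta>)"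
    using assms unfolding differentiable_def by blast
  then have "grad (\<lambda>x. f x + g x) \<theta> = (\<chi> k. D (axis k 1) + E (axis k 1))"
    by (intro grad_eq_derivative has_derivative_add)
  with D E show ?thesis by (simp add: grad_eq_derivative vec_eq_iff)
qed

lemma grad_uminus:
  assumes "f differentiable (at \<theta>)"
  shows "grad (\<lambda>x. - f x) \<theta> = - grad f \<theta>"
proof -
  obtain D where D: "(f has_derivative D) (at \<theta>)"
    using assms unfolding differentiable_def by blast
  then have "grad (\<lambda>x. - f x) \<theta> = (\<chi> k. - D (axis k 1))"
    by (intro grad_eq_derivative has_derivative_minus)
  with D show ?thesis by (simp add: grad_eq_derivative vec_eq_iff)
qed

lemma transpose_jacobian_mult_1:
  assumes "\<forall>i. (\<lambda>x. F x $ i) differentiable (at \<theta>)"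
  shows "transpose (jacobian F \<theta>) *v 1 = grad (\<lambda>x. \<Sum>i\<in>UNIV. F x $ i) \<theta>"
proof -
  have "(transpose (jacobian F \<theta>) *v 1) $ k = (\<Sum>i\<in>UNIV. grad (\<lambda>x. F x $ i) \<theta>) $ k" for k
    by (simp add: vector_matrix_mult_def jacobian_def grad_def)
  then show ?thesis using assms by (simp add: grad_sum vec_eq_iff)
qed

lemma differentiable_inner_vec:
  fixes d e :: "'v::real_normed_vector \<Rightarrow> real^'n::finite"
  assumes "\<forall>i. (\<lambda>x. d x $ i) differentiable (at \<theta>)"
    and "\<forall>i. (\<lambda>x. e x $ i) differentiable (at \<theta>)"
  shows "(\<lambda>x. d x \<bullet> e x) differentiable (at \<theta>)"
  unfolding inner_vec_def using assms by (auto intro!: differentiable_sum differentiable_mult)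

lemma transpose_jacobian_diagm_mult_1:
  fixes d e :: "real^'k::finite \<Rightarrow> real^'n::finite"
  assumes "\<forall>i. (\<lambda>x. d x $ i) differentiable (at \<theta>)"
    and "\<forall>i. (\<lambda>x. e x $ i) differentiable (at \<theta>)"
  shows "transpose (jacobian (\<lambda>x. - (diagm (d x) *v e x)) \<theta>) *v 1 = - grad (\<lambda>x. d x \<bullet> e x) \<theta>"
proof -
  have "transpose (jacobian (\<lambda>x. - (diagm (d x) *v e x)) \<theta>) *v 1
      = grad (\<lambda>x. \<Sum>i\<in>UNIV. (- (diagm (d x) *v e x)) $ i) \<theta>"
    using assms by (intro transpose_jacobian_mult_1) (simp add: diagm_mult_vector_nth)
  also have "\<dots> = grad (\<lambda>x. - (d x \<bullet> e x)) \<theta>"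
    by (simp add: diagm_mult_vector_nth inner_vec_def sum_negf)
  also have "\<dots> = - grad (\<lambda>x. d x \<bullet> e x) \<theta>"
    using assms by (intro grad_uminus differentiable_inner_vec)
  finally show ?thesis .
qed

lemma sum_UNIV_prod: "(\<Sum>x\<in>UNIV. g x) = (\<Sum>s\<in>UNIV. \<Sum>a\<in>UNIV. g (s, a))"
  by (simp add: sum.cartesian_product)

lemma PiMat_mult_nth: "(P ** PiMat p) $ i $ j = P $ i $ fst j * p $ j"
proof -
  have "(P ** PiMat p) $ i $ j = (\<Sum>s\<in>UNIV. if s = fst j then P $ i $ s * p $ j else 0)"
    unfolding matrix_matrix_mult_def PiMat_def by (simp add: if_distrib cong: if_cong)
  then show ?thesis by simp
qed

lemma PsiMat_nth: "PsiMat \<gamma> P p $ i $ j = (if i = j then 1 else 0) - \<gamma> * (P $ i $ fst j * p $ j)"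
  by (simp add: PsiMat_def mat_def PiMat_mult_nth)

lemma Jpi_eq_sum: "Jpi \<gamma> \<mu>0 p q = (1 - \<gamma>) * (\<Sum>sa\<in>UNIV. \<mu>0 $ fst sa * p $ sa * q $ sa)"
proof -
  have "\<mu>0 \<bullet> (PiMat p *v q)
      = (\<Sum>s\<in>UNIV. \<mu>0 $ s * (\<Sum>sa\<in>UNIV. (if fst sa = s then p $ sa else 0) * q $ sa))"
    by (simp add: inner_vec_def matrix_vector_mult_def PiMat_def)
  also have "\<dots> = (\<Sum>s\<in>UNIV. \<Sum>sa\<in>UNIV. if s = fst sa then \<mu>0 $ fst sa * p $ sa * q $ sa else 0)"
    unfolding sum_distrib_left by (intro sum.cong refl) auto
  also have "\<dots> = (\<Sum>sa\<in>UNIV. \<mu>0 $ fst sa * p $ sa * q $ sa)"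
    by (subst sum.swap) simp
  finally show ?thesis unfolding Jpi_def by simp
qed

lemma sa_dist_Suc: "sa_dist \<mu>0 P p (Suc n) = sa_dist \<mu>0 P p n v* (P ** PiMat p)"
  by (simp add: vec_eq_iff sa_dist_def vector_matrix_mult_def PiMat_mult_nth
      sum_distrib_left sum_distrib_right ac_simps)

locale discounted_mdp =
  fixes \<gamma> :: real and \<mu>0 :: "real^'s::finite" and P :: "real^'s^('s \<times> 'a::finite)"
    and p :: "real^('s \<times> 'a)"
  assumes gamma_nonneg: "0 \<le> \<gamma>" and gamma_less_1: "\<gamma> < 1"
    and P_nonneg: "\<forall>sa s'. 0 \<le> P $ sa $ s'"
    and P_stoch: "\<forall>sa. (\<Sum>s'\<in>UNIV. P $ sa $ s') = 1"
    and mu0_pos: "\<forall>s. 0 < \<mu>0 $ s"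
    and mu0_sum: "(\<Sum>s\<in>UNIV. \<mu>0 $ s) = 1"
    and p_pos: "\<forall>sa. 0 < p $ sa"
    and p_norm: "\<forall>s. (\<Sum>a\<in>UNIV. p $ (s, a)) = 1"
begin

lemma row_stochastic_P_PiMat: "row_stochastic (P ** PiMat p)"
proof -
  have "(\<Sum>j\<in>UNIV. P $ i $ fst j * p $ j) = (\<Sum>s\<in>UNIV. P $ i $ s * (\<Sum>a\<in>UNIV. p $ (s, a)))" for i
    by (simp add: sum_UNIV_prod[where g = "\<lambda>j. P $ i $ fst j * p $ j"] sum_distrib_left)
  then show ?thesis
    using P_nonneg P_stoch p_pos p_norm
    by (simp add: row_stochastic_def prob_vector_def PiMat_mult_nth less_imp_le)
qed

lemma invertible_PsiMat: "invertible (PsiMat \<gamma> P p)"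
  unfolding PsiMat_def
  using row_stochastic_P_PiMat gamma_nonneg gamma_less_1 by (rule invertible_mat_1_minus_row_stochastic)

lemma PsiMat_mult_qfun: "PsiMat \<gamma> P p *v qfun \<gamma> P r p = r"
  unfolding PsiMat_def qfun_def
  using row_stochastic_P_PiMat gamma_nonneg gamma_less_1 by (rule mat_1_minus_row_stochastic_mult_neumann)

lemma prob_vector_sa_dist: "prob_vector (sa_dist \<mu>0 P p n)"
proof (induction n)
  case 0
  have "(\<Sum>sa\<in>UNIV. \<mu>0 $ fst sa * p $ sa) = (\<Sum>s\<in>UNIV. \<mu>0 $ s * (\<Sum>a\<in>UNIV. p $ (s, a)))"
    by (simp add: sum_UNIV_prod[where g = "\<lambda>sa. \<mu>0 $ fst sa * p $ sa"] sum_distrib_left)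
  then show ?case
    using mu0_pos mu0_sum p_pos p_norm by (simp add: prob_vector_def sa_dist_def less_imp_le)
next
  case (Suc n)
  then show ?case
    unfolding sa_dist_Suc using row_stochastic_P_PiMat by (intro prob_vector_vector_matrix_mult)
qed

lemma sa_dist_nonneg: "0 \<le> sa_dist \<mu>0 P p n $ sa"
  using prob_vector_sa_dist unfolding prob_vector_def by blast

lemma iterates_eq_discounted_sa_dist:
  "((\<lambda>v. transpose (\<gamma> *\<^sub>R (P ** PiMat p)) *v v) ^^ n) (sa_dist \<mu>0 P p 0)
     = \<gamma> ^ n *\<^sub>R sa_dist \<mu>0 P p n"
  by (induction n) (simp_all add: sa_dist_Suc vector_scaleR_matrix_ac scaleR_vector_matrix_assoc)

lemma summable_discounted_sa_dist: "summable (\<lambda>n. \<gamma> ^ n *\<^sub>R sa_dist \<mu>0 P p n)"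
proof (rule summable_if_components_le_geometric[OF gamma_nonneg gamma_less_1])
  fix n j
  note sa_dist_nonneg[of n j]
  moreover have "sa_dist \<mu>0 P p n $ j \<le> 1"
    using prob_vector_sa_dist by (rule prob_vector_le_1)
  ultimately show "\<bar>(\<gamma> ^ n *\<^sub>R sa_dist \<mu>0 P p n) $ j\<bar> \<le> \<gamma> ^ n * 1"
    using gamma_nonneg by (simp add: mult_left_le)
qed

lemma dvis_vector_matrix_PsiMat: "dvis \<gamma> \<mu>0 P p v* PsiMat \<gamma> P p = (1 - \<gamma>) *\<^sub>R sa_dist \<mu>0 P p 0"
proof -
  let ?T = "transpose (\<gamma> *\<^sub>R (P ** PiMat p))"
  let ?S = "\<Sum>n. \<gamma> ^ n *\<^sub>R sa_dist \<mu>0 P p n"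
  have "(mat 1 - ?T) *v (\<Sum>n. ((\<lambda>v. ?T *v v) ^^ n) (sa_dist \<mu>0 P p 0)) = sa_dist \<mu>0 P p 0"
    using summable_discounted_sa_dist
    by (intro mat_1_minus_mult_suminf_iterates) (simp only: iterates_eq_discounted_sa_dist)
  then have "(mat 1 - ?T) *v ?S = sa_dist \<mu>0 P p 0"
    by (simp only: iterates_eq_discounted_sa_dist)
  then have "?S v* PsiMat \<gamma> P p = sa_dist \<mu>0 P p 0"
    by (simp add: PsiMat_def matrix_vector_mult_diff_rdistrib vector_matrix_mult_diff_rdistrib)
  then show ?thesis
    unfolding dvis_def by (simp add: scaleR_vector_matrix_assoc)
qed

lemma dvis_pos: "0 < dvis \<gamma> \<mu>0 P p $ sa"
proof -
  have "0 < (\<Sum>n. (\<gamma> ^ n *\<^sub>R sa_dist \<mu>0 P p n) $ sa)"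
  proof (rule suminf_pos2)
    show "summable (\<lambda>n. (\<gamma> ^ n *\<^sub>R sa_dist \<mu>0 P p n) $ sa)"
      using summable_discounted_sa_dist by (rule summable_vec_nth)
    show "0 \<le> (\<gamma> ^ n *\<^sub>R sa_dist \<mu>0 P p n) $ sa" for n
      using sa_dist_nonneg gamma_nonneg by simp
    show "0 < (\<gamma> ^ 0 *\<^sub>R sa_dist \<mu>0 P p 0) $ sa"
      using mu0_pos p_pos[rule_format, of sa] by (simp add: sa_dist_def)
  qed
  moreover have "dvis \<gamma> \<mu>0 P p $ sa = (1 - \<gamma>) * (\<Sum>n. (\<gamma> ^ n *\<^sub>R sa_dist \<mu>0 P p n) $ sa)"
    unfolding dvis_def using sums_unique[OF sums_vec_nth[OF summable_sums[OF summable_discounted_sa_dist]]]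
    by simp
  ultimately show ?thesis using gamma_less_1 by simp
qed

lemma Jpi_qfun:
  "Jpi \<gamma> \<mu>0 p (qfun \<gamma> P r p) = Jpi \<gamma> \<mu>0 p q + dvis \<gamma> \<mu>0 P p \<bullet> tderr \<gamma> P r p q"
proof -
  have Jpi: "Jpi \<gamma> \<mu>0 p x = (1 - \<gamma>) * (sa_dist \<mu>0 P p 0 \<bullet> x)" for x
    by (simp add: Jpi_eq_sum inner_vec_def sa_dist_def)
  have "tderr \<gamma> P r p q = PsiMat \<gamma> P p *v (qfun \<gamma> P r p - q)"
    by (simp add: tderr_def matrix_vector_mult_diff_distrib PsiMat_mult_qfun)
  then have "dvis \<gamma> \<mu>0 P p \<bullet> tderr \<gamma> P r p q
      = (1 - \<gamma>) * (sa_dist \<mu>0 P p 0 \<bullet> (qfun \<gamma> P r p - q))"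
    by (simp flip: dot_lmul_matrix add: dvis_vector_matrix_PsiMat)
  then show ?thesis by (simp add: Jpi algebra_simps)
qed

end

lemma differentiable_Jpi:
  fixes pol :: "'v::real_normed_vector \<Rightarrow> real^('s::finite \<times> 'a::finite)"
  assumes "\<forall>sa. (\<lambda>x. pol x $ sa) differentiable (at \<theta>)"
  shows "(\<lambda>x. Jpi \<gamma> \<mu>0 (pol x) q) differentiable (at \<theta>)"
  unfolding Jpi_eq_sum using assms by (auto intro!: differentiable_sum differentiable_mult)

lemma differentiable_tderr:
  fixes pol :: "'v::real_normed_vector \<Rightarrow> real^('s::finite \<times> 'a::finite)"
  assumes "\<forall>sa. (\<lambda>x. pol x $ sa) differentiable (at \<theta>)"
  shows "(\<lambda>x. tderr \<gamma> P r (pol x) q $ sa) differentiable (at \<theta>)"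
  unfolding tderr_def matrix_vector_mult_def PsiMat_nth using assms
  by (auto intro!: differentiable_sum differentiable_mult)

lemma differentiable_dvis:
  fixes pol :: "'v::real_normed_vector \<Rightarrow> real^('s::finite \<times> 'a::finite)"
  assumes "\<And>x. discounted_mdp \<gamma> \<mu>0 P (pol x)"
    and "\<forall>sa. (\<lambda>x. pol x $ sa) differentiable (at \<theta>)"
  shows "(\<lambda>x. dvis \<gamma> \<mu>0 P (pol x) $ sa) differentiable (at \<theta>)"
proof (rule differentiable_linear_system_solution)
  show "\<forall>i j. (\<lambda>x. transpose (PsiMat \<gamma> P (pol x)) $ i $ j) differentiable (at \<theta>)"
    unfolding transpose_def PsiMat_nth using assms(2) by auto
  show "\<forall>i. (\<lambda>x. ((1 - \<gamma>) *\<^sub>R sa_dist \<mu>0 P (pol x) 0) $ i) differentiable (at \<theta>)"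
    unfolding sa_dist_def using assms(2) by auto
  show "\<forall>x. det (transpose (PsiMat \<gamma> P (pol x))) \<noteq> 0"
    using discounted_mdp.invertible_PsiMat[OF assms(1)] by (simp add: invertible_det_nz)
  show "\<forall>x. transpose (PsiMat \<gamma> P (pol x)) *v dvis \<gamma> \<mu>0 P (pol x)
      = (1 - \<gamma>) *\<^sub>R sa_dist \<mu>0 P (pol x) 0"
    using discounted_mdp.dvis_vector_matrix_PsiMat[OF assms(1)] by simp
qed

theorem mainTheorem4:
  fixes \<gamma> :: real
    and \<mu>0 :: "real^'s::finite"
    and P :: "real^'s^('s \<times> 'a::finite)"
    and r :: "real^('s \<times> 'a)"
    and pol :: "real^'k::finite \<Rightarrow> real^('s \<times> 'a)"
    and \<theta> :: "real^'k"
    and q :: "real^('s \<times> 'a)"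
  assumes gamma: "0 \<le> \<gamma>" "\<gamma> < 1"
    and P_nonneg: "\<forall>sa s'. 0 \<le> P $ sa $ s'"
    and P_stoch: "\<forall>sa. (\<Sum>s'\<in>UNIV. P $ sa $ s') = 1"
    and mu0_pos: "\<forall>s. 0 < \<mu>0 $ s"
    and mu0_sum: "(\<Sum>s\<in>UNIV. \<mu>0 $ s) = 1"
    and pol_pos: "\<forall>x sa. 0 < pol x $ sa"
    and pol_norm: "\<forall>x s. (\<Sum>a\<in>UNIV. pol x $ (s, a)) = 1"
    and pol_diff: "\<forall>x. pol differentiable (at x)"
  shows "g_semi \<gamma> \<mu>0 P r pol \<theta> q
           = grad (\<lambda>x. Jpi \<gamma> \<mu>0 (pol x) q) \<theta>
             + grad (\<lambda>x. dvis \<gamma> \<mu>0 P (pol x) \<bullet> tderr \<gamma> P r (pol x) q) \<theta>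
       \<and> g_semi \<gamma> \<mu>0 P r pol \<theta> q
           = grad (\<lambda>x. Jpi \<gamma> \<mu>0 (pol x) (qfun \<gamma> P r (pol x))) \<theta>"
proof -
  have mdp: "discounted_mdp \<gamma> \<mu>0 P (pol x)" for x
    by unfold_locales (use assms in auto)
  have pol_nth: "\<forall>sa. (\<lambda>x. pol x $ sa) differentiable (at \<theta>)"
    using pol_diff differentiable_vec_nth by blast
  define d e where "d x = dvis \<gamma> \<mu>0 P (pol x)" and "e x = tderr \<gamma> P r (pol x) q" for x
  have d_nth: "\<forall>sa. (\<lambda>x. d x $ sa) differentiable (at \<theta>)"
    unfolding d_def using mdp pol_nth by (blast intro: differentiable_dvis)
  have e_nth: "\<forall>sa. (\<lambda>x. e x $ sa) differentiable (at \<theta>)"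
    unfolding e_def using pol_nth by (blast intro: differentiable_tderr)
  have "matrix_inv (diagm (d \<theta>)) *v d \<theta> = 1"
    using discounted_mdp.dvis_pos[OF mdp] unfolding d_def
    by (intro matrix_inv_diagm_mult_self) (metis less_irrefl)
  then have "g_semi \<gamma> \<mu>0 P r pol \<theta> q
      = grad (\<lambda>x. Jpi \<gamma> \<mu>0 (pol x) q) \<theta> + grad (\<lambda>x. d x \<bullet> e x) \<theta>"
    using transpose_jacobian_diagm_mult_1[OF d_nth e_nth]
    unfolding g_semi_def Let_def d_def e_def by simp
  moreover have "(\<lambda>x. Jpi \<gamma> \<mu>0 (pol x) (qfun \<gamma> P r (pol x)))
      = (\<lambda>x. Jpi \<gamma> \<mu>0 (pol x) q + d x \<bullet> e x)"
    unfolding d_def e_def using discounted_mdp.Jpi_qfun[OF mdp] by blast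
  then have "grad (\<lambda>x. Jpi \<gamma> \<mu>0 (pol x) (qfun \<gamma> P r (pol x))) \<theta>
      = grad (\<lambda>x. Jpi \<gamma> \<mu>0 (pol x) q) \<theta> + grad (\<lambda>x. d x \<bullet> e x) \<theta>"
    using grad_add[OF differentiable_Jpi[OF pol_nth] differentiable_inner_vec[OF d_nth e_nth]]
    by simp
  ultimately show ?thesis unfolding d_def e_def by simp
qed

end
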